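(* Let $\Omega\subset\mathbb{R}^n$ be a bounded, strictly convex domain, let $v\in C(\overline\Omega)$ be convex, and let $a>0$. For a measurable set $F\subset\Omega$, let $V$ be the set of vertices of all paraboloids of opening $-a$ that are tangent from below to $v$ in $\Omega$ at points of $F$. Then $|V|\ge|F|$.
   Context: A paraboloid of opening $-a$ is a function $P(x)=-\frac a2|x|^2+y\cdot x+b$ ($y\in\mathbb{R}^n$, $b\in\mathbb{R}$); its vertex is the point $y/a$ at which it attains its maximum. $P$ is tangent from below to $v$ in $\Omega$ at $x_0\in\Omega$ if $P\le v$ on $\overline\Omega$ and $P(x_0)=v(x_0)$. $|\cdot|$ denotes Lebesgue measure. *)

theory Defs
  imports "HOL-Analysis.Analysis"
begin

definition strictly_convex_domain :: "'a::euclidean_space set \<Rightarrow> bool" where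
  "strictly_convex_domain \<Omega> \<longleftrightarrow> \<Omega> \<noteq> {} \<and> open \<Omega> \<and> connected \<Omega> \<and> convex \<Omega> \<and>
     (\<forall>x\<in>closure \<Omega>. \<forall>y\<in>closure \<Omega>. x \<noteq> y \<longrightarrow> open_segment x y \<subseteq> \<Omega>)"

definition paraboloid :: "real \<Rightarrow> 'a::euclidean_space \<Rightarrow> real \<Rightarrow> 'a \<Rightarrow> real" where
  "paraboloid a y b x = - (a / 2) * (norm x)\<^sup>2 + y \<bullet> x + b"

definition tangent_below :: "('a::euclidean_space \<Rightarrow> real) \<Rightarrow> ('a \<Rightarrow> real) \<Rightarrow> 'a set \<Rightarrow> 'a \<Rightarrow> bool" where
  "tangent_below P v \<Omega> x0 \<longleftrightarrow> x0 \<in> \<Omega> \<and> (\<forall>x\<in>closure \<Omega>. P x \<le> v x) \<and> P x0 = v x0"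

definition vertex_set :: "real \<Rightarrow> ('a::euclidean_space \<Rightarrow> real) \<Rightarrow> 'a set \<Rightarrow> 'a set \<Rightarrow> 'a set" where
  "vertex_set a v \<Omega> F = {(1 / a) *\<^sub>R y | y. \<exists>b. \<exists>x0\<in>F. tangent_below (paraboloid a y b) v \<Omega> x0}"

definition outer_lmeasure :: "'a::euclidean_space set \<Rightarrow> ennreal" where
  "outer_lmeasure S = (INF W\<in>{W. W \<in> sets lebesgue \<and> S \<subseteq> W}. emeasure lebesgue W)"

end

theory Submission
  imports Defs
begin

text \<open>
  Let \<open>P z\<close> minimise \<open>v + a/2 |\<cdot> - z|\<^sup>2\<close> over the closure of \<open>\<Omega>\<close>, the proximal map of \<open>v\<close>.
  A paraboloid of opening \<open>-a\<close> with vertex \<open>z\<close> touches \<open>v\<close> from below at \<open>x\<^sub>0\<close> exactly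
  when \<open>x\<^sub>0\<close> is such a minimiser, and convexity of \<open>v\<close> makes \<open>P\<close> single-valued and
  1-Lipschitz. A subgradient \<open>q\<close> of \<open>v\<close> at \<open>x\<^sub>0 \<in> F\<close> gives the vertex \<open>x\<^sub>0 + q/a\<close>, so
  \<open>F \<subseteq> P(V)\<close>; as 1-Lipschitz maps of \<open>\<real>\<^sup>n\<close> do not increase Lebesgue outer measure,
  \<open>|F| \<le> |V|\<close>.
\<close>

definition is_prox :: "real \<Rightarrow> ('a::real_inner \<Rightarrow> real) \<Rightarrow> 'a set \<Rightarrow> 'a \<Rightarrow> 'a \<Rightarrow> bool" where
  "is_prox a v K z x \<longleftrightarrow> is_arg_min (\<lambda>y. v y + a / 2 * (norm (y - z))\<^sup>2) (\<lambda>y. y \<in> K) x"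

definition prox :: "real \<Rightarrow> ('a::real_inner \<Rightarrow> real) \<Rightarrow> 'a set \<Rightarrow> 'a \<Rightarrow> 'a" where
  "prox a v K z = arg_min_on (\<lambda>y. v y + a / 2 * (norm (y - z))\<^sup>2) K"

lemma is_prox_iff:
  "is_prox a v K z x \<longleftrightarrow>
     x \<in> K \<and> (\<forall>y\<in>K. v x + a / 2 * (norm (x - z))\<^sup>2 \<le> v y + a / 2 * (norm (y - z))\<^sup>2)"
  unfolding is_prox_def is_arg_min_linorder by blast

lemma is_prox_variational_inequality:
  fixes v :: "'a::real_inner \<Rightarrow> real"
  assumes v: "convex_on K v" and x: "is_prox a v K z x" and y: "y \<in> K"
  shows "a * ((x - y) \<bullet> (x - z)) \<le> v y - v x"
proof -
  define c where "c = v y - v x - a * ((x - y) \<bullet> (x - z))"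
  define d where "d = a / 2 * (norm (y - x))\<^sup>2"
  have "0 \<le> c + t * d" if t: "0 < t" "t < 1" for t
  proof -
    define xt where "xt = (1 - t) *\<^sub>R x + t *\<^sub>R y"
    have xK: "x \<in> K" using x by (simp add: is_prox_iff)
    then have "xt \<in> K"
      unfolding xt_def using v y t by (simp add: convex_on_def convex_def)
    then have "v x + a / 2 * (norm (x - z))\<^sup>2 \<le> v xt + a / 2 * (norm (xt - z))\<^sup>2"
      using x by (simp add: is_prox_iff)
    moreover have "v xt \<le> (1 - t) * v x + t * v y"
      unfolding xt_def using v xK y t by (intro convex_onD) auto
    moreover have "a / 2 * (norm (xt - z))\<^sup>2
        = a / 2 * (norm (x - z))\<^sup>2 - t * (a * ((x - y) \<bullet> (x - z))) + t * (t * d)"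
    proof -
      have xt_z: "xt - z = (x - z) - t *\<^sub>R (x - y)" unfolding xt_def by (simp add: algebra_simps)
      show ?thesis
        unfolding xt_z d_def power2_norm_eq_inner
        by (simp add: inner_diff_left inner_diff_right inner_commute algebra_simps)
    qed
    ultimately have "0 \<le> t * (v y - v x) - t * (a * ((x - y) \<bullet> (x - z))) + t * (t * d)"
      by (simp add: algebra_simps)
    then have "0 \<le> t * (c + t * d)"
      unfolding c_def by (simp only: distrib_left right_diff_distrib)
    then show ?thesis using t by (simp add: zero_le_mult_iff)
  qed
  then have "\<forall>\<^sub>F t in at_right 0. 0 \<le> c + t * d"
    using eventually_at_right_real[of 0 1] by (auto elim: eventually_mono)
  moreover have "((\<lambda>t. c + t * d) \<longlongrightarrow> c) (at_right 0)"
    by (auto intro!: tendsto_eq_intros)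
  ultimately have "0 \<le> c"
    by (intro tendsto_lowerbound) auto
  then show ?thesis unfolding c_def by simp
qed

lemma is_prox_nonexpansive:
  fixes v :: "'a::real_inner \<Rightarrow> real"
  assumes v: "convex_on K v" and a: "a > 0"
    and x1: "is_prox a v K z1 x1" and x2: "is_prox a v K z2 x2"
  shows "dist x1 x2 \<le> dist z1 z2"
proof -
  have "a * ((x1 - x2) \<bullet> (x1 - z1)) \<le> v x2 - v x1"
    using x2 by (intro is_prox_variational_inequality[OF v x1]) (simp add: is_prox_iff)
  moreover have "a * ((x2 - x1) \<bullet> (x2 - z2)) \<le> v x1 - v x2"
    using x1 by (intro is_prox_variational_inequality[OF v x2]) (simp add: is_prox_iff)
  ultimately have "a * ((x1 - x2) \<bullet> (x1 - z1) + (x2 - x1) \<bullet> (x2 - z2)) \<le> 0"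
    unfolding distrib_left by linarith
  also have "(x1 - x2) \<bullet> (x1 - z1) + (x2 - x1) \<bullet> (x2 - z2)
      = (norm (x1 - x2))\<^sup>2 - (x1 - x2) \<bullet> (z1 - z2)"
    unfolding power2_norm_eq_inner by (simp add: inner_diff_left inner_diff_right inner_commute)
  finally have "a * ((norm (x1 - x2))\<^sup>2 - (x1 - x2) \<bullet> (z1 - z2)) \<le> 0" .
  then have "(norm (x1 - x2))\<^sup>2 \<le> (x1 - x2) \<bullet> (z1 - z2)"
    using a by (simp add: mult_le_0_iff)
  also have "\<dots> \<le> norm (x1 - x2) * norm (z1 - z2)"
    by (rule norm_cauchy_schwarz)
  finally show ?thesis
    by (cases "x1 = x2") (simp_all add: dist_norm power2_eq_square mult_le_cancel_left)
qed

lemma is_prox_prox: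
  assumes "compact K" "K \<noteq> {}" "continuous_on K v"
  shows "is_prox a v K z (prox a v K z)"
proof -
  have "continuous_on K (\<lambda>y. v y + a / 2 * (norm (y - z))\<^sup>2)"
    using assms(3) by (intro continuous_intros)
  then obtain x where "x \<in> K" "\<forall>y\<in>K. v x + a / 2 * (norm (x - z))\<^sup>2 \<le> v y + a / 2 * (norm (y - z))\<^sup>2"
    using continuous_attains_inf[OF assms(1,2)] by blast
  then have "is_prox a v K z x"
    by (simp add: is_prox_iff)
  then show ?thesis
    unfolding prox_def arg_min_on_def arg_min_def is_prox_def by (rule someI)
qed

context
  fixes K :: "'a::real_inner set" and v :: "'a \<Rightarrow> real" and a :: real
  assumes K: "compact K" "K \<noteq> {}" and v: "continuous_on K v" "convex_on K v" and a: "a > 0"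
begin

lemma prox_eqI: "is_prox a v K z x \<Longrightarrow> prox a v K z = x"
  using is_prox_nonexpansive[OF v(2) a is_prox_prox[OF K v(1)], of z x z] by simp

lemma lipschitz_on_prox: "1-lipschitz_on UNIV (prox a v K)"
  using is_prox_nonexpansive[OF v(2) a is_prox_prox[OF K v(1)] is_prox_prox[OF K v(1)]]
  by (simp add: lipschitz_on_def)

end

lemma inner_eq_zero_if_minimal_at_interior:
  fixes p :: "'a::real_inner"
  assumes x0: "x0 \<in> interior K" and min: "\<And>x. x \<in> K \<Longrightarrow> p \<bullet> x0 \<le> p \<bullet> x"
  shows "p = 0"
proof (rule ccontr)
  assume "p \<noteq> 0"
  obtain e where "e > 0" "cball x0 e \<subseteq> K"
    using x0 by (meson mem_interior_cball)
  moreover have "x0 - (e / norm p) *\<^sub>R p \<in> cball x0 e"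
    using \<open>e > 0\<close> by (simp add: dist_norm)
  ultimately have "p \<bullet> x0 \<le> p \<bullet> (x0 - (e / norm p) *\<^sub>R p)"
    by (intro min) blast
  also have "\<dots> = p \<bullet> x0 - e * norm p"
    using \<open>p \<noteq> 0\<close> by (simp add: inner_diff_right power2_norm_eq_inner[symmetric] power2_eq_square)
  finally show False
    using \<open>e > 0\<close> \<open>p \<noteq> 0\<close> by (simp add: mult_le_0_iff)
qed

lemma convex_on_subgradient_at_interior:
  fixes v :: "'a::euclidean_space \<Rightarrow> real"
  assumes v: "convex_on K v" and x0: "x0 \<in> interior K"
  obtains q where "\<And>x. x \<in> K \<Longrightarrow> v x0 + q \<bullet> (x - x0) \<le> v x"
proof -
  have x0K: "x0 \<in> K" using x0 interior_subset by blast
  (* Separate the half-line below (x0, v x0) from the epigraph; the hyperplane is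
     not vertical because x0 is an interior point. *)
  have "convex ({x0} \<times> {..<v x0})" "convex (epigraph K v)"
    using v by (simp_all add: convex_Times convex_epigraphI)
  moreover have "{x0} \<times> {..<v x0} \<noteq> {}" "epigraph K v \<noteq> {}"
    using x0K mem_epigraph[of x0 "v x0" K v] by auto
  moreover have "({x0} \<times> {..<v x0}) \<inter> epigraph K v = {}"
    by (auto simp: epigraph_def)
  ultimately obtain n b where n: "n \<noteq> 0"
    and below: "\<forall>y\<in>{x0} \<times> {..<v x0}. n \<bullet> y \<le> b" and above: "\<forall>y\<in>epigraph K v. b \<le> n \<bullet> y"
    using separating_hyperplane_sets by metis
  obtain p c where pc: "n = (p, c)" by (cases n)
  have sep: "p \<bullet> x0 + c * s \<le> p \<bullet> x + c * t" if "s < v x0" "x \<in> K" "v x \<le> t" for s x t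
    using below[rule_format, of "(x0, s)"] above[rule_format, of "(x, t)"] that
    by (simp add: pc inner_Pair mem_epigraph)
  have "0 \<le> c"
    using sep[of "v x0 - 1" x0 "v x0"] x0K by (simp add: algebra_simps)
  moreover have "c \<noteq> 0"
  proof
    assume "c = 0"
    then have "p = 0"
      using sep[of "v x0 - 1"] by (intro inner_eq_zero_if_minimal_at_interior[OF x0]) force
    with \<open>c = 0\<close> n show False by (simp add: pc zero_prod_def)
  qed
  ultimately have "c > 0" by simp
  have "v x0 + (- (1 / c) *\<^sub>R p) \<bullet> (x - x0) \<le> v x" if x: "x \<in> K" for x
  proof -
    have "v x0 \<le> v x + p \<bullet> (x - x0) / c"
    proof (rule dense_le)
      fix s assume "s < v x0"
      from sep[OF this x order_refl] \<open>c > 0\<close> show "s \<le> v x + p \<bullet> (x - x0) / c"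
        by (simp add: field_simps inner_diff_right)
    qed
    then show ?thesis by (simp add: field_simps)
  qed
  then show ?thesis using that by blast
qed

lemma is_prox_if_subgradient:
  fixes v :: "'a::real_inner \<Rightarrow> real"
  assumes a: "a > 0" and x0: "x0 \<in> K" and q: "\<And>x. x \<in> K \<Longrightarrow> v x0 + q \<bullet> (x - x0) \<le> v x"
  shows "is_prox a v K (x0 + (1 / a) *\<^sub>R q) x0"
  unfolding is_prox_iff
proof (intro conjI ballI x0)
  fix y assume y: "y \<in> K"
  define u where "u = (1 / a) *\<^sub>R q"
  have q_eq: "q = a *\<^sub>R u" unfolding u_def using a by simp
  have "a / 2 * (norm (y - (x0 + u)))\<^sup>2 = a / 2 * (norm u)\<^sup>2 + a / 2 * (norm (y - x0))\<^sup>2 - q \<bullet> (y - x0)"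
    unfolding q_eq power2_norm_eq_inner by (simp add: inner_diff_left inner_diff_right inner_commute algebra_simps)
  moreover have "0 \<le> a / 2 * (norm (y - x0))\<^sup>2"
    using a by simp
  moreover have "a / 2 * (norm (x0 - (x0 + u)))\<^sup>2 = a / 2 * (norm u)\<^sup>2"
    by simp
  ultimately show "v x0 + a / 2 * (norm (x0 - (x0 + u)))\<^sup>2 \<le> v y + a / 2 * (norm (y - (x0 + u)))\<^sup>2"
    using q[OF y] by linarith
qed

lemma paraboloid_vertex_form:
  "paraboloid a (a *\<^sub>R z) b x = b + a / 2 * (norm z)\<^sup>2 - a / 2 * (norm (x - z))\<^sup>2"
  unfolding paraboloid_def power2_norm_eq_inner
  by (simp add: inner_diff_left inner_diff_right inner_commute algebra_simps)

lemma vertex_set_memI: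
  assumes a: "a \<noteq> 0" and x0: "x0 \<in> F" "x0 \<in> \<Omega>" and prox: "is_prox a v (closure \<Omega>) z x0"
  shows "z \<in> vertex_set a v \<Omega> F"
proof -
  define b where "b = v x0 + a / 2 * (norm (x0 - z))\<^sup>2 - a / 2 * (norm z)\<^sup>2"
  have "tangent_below (paraboloid a (a *\<^sub>R z) b) v \<Omega> x0"
    using x0(2) prox unfolding tangent_below_def is_prox_iff paraboloid_vertex_form b_def
    by (auto simp: algebra_simps)
  then show ?thesis
    unfolding vertex_set_def using a x0(1) by (auto intro!: exI[of _ "a *\<^sub>R z"])
qed

lemma emeasure_UN_countable_le:
  assumes I: "countable I" and X: "\<And>i. i \<in> I \<Longrightarrow> X i \<in> sets M"
  shows "emeasure M (\<Union>(X ` I)) \<le> (\<integral>\<^sup>+i. emeasure M (X i) \<partial>count_space I)"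
proof -
  have ind: "indicator (\<Union>(X ` I)) x \<le> (\<integral>\<^sup>+i. indicator (X i) x \<partial>count_space I :: ennreal)" for x
  proof (cases "x \<in> \<Union>(X ` I)")
    case True
    then obtain j where "j \<in> I" "x \<in> X j" by blast
    then show ?thesis
      using nn_integral_ge_point[of j I "\<lambda>i. indicator (X i) x :: ennreal"] True by simp
  qed simp
  note sets.countable_UN'[OF I, unfolded subset_eq, measurable]
  have "emeasure M (\<Union>(X ` I)) = (\<integral>\<^sup>+x. indicator (\<Union>(X ` I)) x \<partial>M)"
    using X by simp
  also have "\<dots> \<le> (\<integral>\<^sup>+x. \<integral>\<^sup>+i. indicator (X i) x \<partial>count_space I \<partial>M)"
    by (intro nn_integral_mono ind)
  also have "\<dots> = (\<integral>\<^sup>+i. \<integral>\<^sup>+x. indicator (X i) x \<partial>M \<partial>count_space I)"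
    using X by (intro nn_integral_count_space_nn_integral I) simp
  also have "\<dots> = (\<integral>\<^sup>+i. emeasure M (X i) \<partial>count_space I)"
    using X by (intro nn_integral_cong) simp
  finally show ?thesis .
qed

lemma emeasure_subset_nonexpansive_image_le:
  fixes g :: "'a::euclidean_space \<Rightarrow> 'a"
  assumes g: "1-lipschitz_on U g" and U: "open U"
    and F: "F \<in> sets lebesgue" "F \<subseteq> g ` U"
  shows "emeasure lebesgue F \<le> emeasure lebesgue U"
proof -
  (* Vitali: disjoint balls inside U exhaust U up to a null set N; g maps each ball into
     a ball of the same radius, and N onto a null set. *)
  define I where "I = {i. 0 < snd i \<and> cball (fst i) (snd i) \<subseteq> U}"
  have fine: "\<exists>i. i \<in> I \<and> x \<in> cball (fst i) (snd i) \<and> snd i < d" if "x \<in> U" "0 < d" for x d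
  proof -
    obtain e where "e > 0" "cball x e \<subseteq> U"
      using U \<open>x \<in> U\<close> open_contains_cball by blast
    then show ?thesis
      using \<open>0 < d\<close> by (intro exI[of _ "(x, min (d / 2) e)"]) (auto simp: I_def)
  qed
  obtain C where C: "countable C" "C \<subseteq> I"
    and disj: "pairwise (\<lambda>i j. disjnt (cball (fst i) (snd i)) (cball (fst j) (snd j))) C"
    and neg: "negligible (U - (\<Union>i\<in>C. cball (fst i) (snd i)))"
    by (rule Vitali_covering_theorem_cballs[of I snd U fst]) (use fine in \<open>auto simp: I_def\<close>)
  define N where "N = U - (\<Union>i\<in>C. cball (fst i) (snd i))"
  have "negligible (g ` N)"
  proof (rule negligible_locally_Lipschitz_image)
    show "negligible N" using neg unfolding N_def .
    show "\<exists>T B. open T \<and> x \<in> T \<and> (\<forall>y\<in>N \<inter> T. norm (g y - g x) \<le> B * norm (y - x))"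
      if "x \<in> N" for x
      using g that unfolding N_def lipschitz_on_def dist_norm
      by (intro exI[of _ UNIV] exI[of _ 1]) auto
  qed simp
  have cover: "g ` U \<subseteq> (\<Union>i\<in>C. cball (g (fst i)) (snd i)) \<union> g ` N"
  proof
    fix y assume "y \<in> g ` U"
    then obtain x where x: "x \<in> U" "y = g x" by blast
    show "y \<in> (\<Union>i\<in>C. cball (g (fst i)) (snd i)) \<union> g ` N"
    proof (cases "x \<in> N")
      case False
      then obtain i where i: "i \<in> C" "x \<in> cball (fst i) (snd i)"
        using x unfolding N_def by blast
      moreover have "0 < snd i" "cball (fst i) (snd i) \<subseteq> U"
        using C(2) i(1) by (auto simp: I_def)
      ultimately have "fst i \<in> U"
        by (meson centre_in_cball less_imp_le subsetD)
      with g x i have "dist (g (fst i)) (g x) \<le> snd i"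
        by (fastforce simp: lipschitz_on_def)
      with i x show ?thesis by auto
    qed (use x in auto)
  qed
  have sets_balls: "(\<Union>i\<in>C. cball (g (fst i)) (snd i)) \<in> sets lebesgue"
    using C(1) by (intro sets.countable_UN') auto
  have "emeasure lebesgue F \<le> emeasure lebesgue ((\<Union>i\<in>C. cball (g (fst i)) (snd i)) \<union> g ` N)"
    using F cover sets_balls \<open>negligible (g ` N)\<close>
    by (intro emeasure_mono) (auto intro: negligible_imp_sets)
  also have "\<dots> \<le> emeasure lebesgue (\<Union>i\<in>C. cball (g (fst i)) (snd i)) + emeasure lebesgue (g ` N)"
    using sets_balls \<open>negligible (g ` N)\<close>
    by (intro emeasure_subadditive) (auto intro: negligible_imp_sets)
  also have "emeasure lebesgue (g ` N) = 0"
    using \<open>negligible (g ` N)\<close> negligible_iff_null_sets by blast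
  also have "emeasure lebesgue (\<Union>i\<in>C. cball (g (fst i)) (snd i))
      \<le> (\<integral>\<^sup>+i. emeasure lebesgue (cball (g (fst i)) (snd i)) \<partial>count_space C)"
    using C(1) by (intro emeasure_UN_countable_le) auto
  also have "\<dots> = (\<integral>\<^sup>+i. emeasure lebesgue (cball (fst i) (snd i)) \<partial>count_space C)"
    using C(2) by (intro nn_integral_cong) (auto simp: I_def emeasure_cball)
  also have "\<dots> = emeasure lebesgue (\<Union>i\<in>C. cball (fst i) (snd i))"
    using C(1) disj
    by (intro emeasure_UN_countable[symmetric])
       (auto simp: disjoint_family_on_def pairwise_def disjnt_def)
  also have "\<dots> \<le> emeasure lebesgue U"
    using C(2) U by (intro emeasure_mono) (auto simp: I_def)
  finally show ?thesis by simp
qed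

lemma emeasure_subset_nonexpansive_image_le_outer_lmeasure:
  fixes g :: "'a::euclidean_space \<Rightarrow> 'a"
  assumes g: "1-lipschitz_on UNIV g" and F: "F \<in> sets lebesgue" "F \<subseteq> g ` S"
  shows "emeasure lebesgue F \<le> outer_lmeasure S"
  unfolding outer_lmeasure_def
proof (rule INF_greatest)
  fix W assume W: "W \<in> {W. W \<in> sets lebesgue \<and> S \<subseteq> W}"
  show "emeasure lebesgue F \<le> emeasure lebesgue W"
  proof (rule ennreal_le_epsilon)
    fix e :: real assume "0 < e"
    then obtain T where T: "open T" "W \<subseteq> T" "T - W \<in> lmeasurable" "emeasure lebesgue (T - W) < e"
      using sets_lebesgue_outer_open W by blast
    have "emeasure lebesgue F \<le> emeasure lebesgue T"
      using W T F lipschitz_on_subset[OF g]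
      by (intro emeasure_subset_nonexpansive_image_le) blast+
    also have "\<dots> \<le> emeasure lebesgue W + emeasure lebesgue (T - W)"
      using W T(3) emeasure_subadditive[of W lebesgue "T - W"] Un_Diff_cancel2[of W T] \<open>W \<subseteq> T\<close>
      by (simp add: Un_absorb1)
    also have "\<dots> \<le> emeasure lebesgue W + e"
      using T(4) by (intro add_left_mono) simp
    finally show "emeasure lebesgue F \<le> emeasure lebesgue W + e" .
  qed
qed

theorem lemma3p2:
  fixes \<Omega> F :: "'a::euclidean_space set" and v :: "'a \<Rightarrow> real" and a :: real
  assumes "strictly_convex_domain \<Omega>" and "bounded \<Omega>"
    and "continuous_on (closure \<Omega>) v" and "convex_on (closure \<Omega>) v"
    and "a > 0"
    and "F \<in> sets lebesgue" and "F \<subseteq> \<Omega>"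
  shows "outer_lmeasure (vertex_set a v \<Omega> F) \<ge> emeasure lebesgue F"
proof -
  let ?K = "closure \<Omega>"
  have "open \<Omega>" "\<Omega> \<noteq> {}"
    using assms(1) by (simp_all add: strictly_convex_domain_def)
  have K: "compact ?K" "?K \<noteq> {}"
    using assms(2) \<open>\<Omega> \<noteq> {}\<close> by (simp_all add: compact_closure)
  note prox_props = K assms(3,4,5)
  have "F \<subseteq> prox a v ?K ` vertex_set a v \<Omega> F"
  proof
    fix x0 assume "x0 \<in> F"
    with assms(7) have "x0 \<in> \<Omega>" by blast
    then have "x0 \<in> interior ?K"
      using \<open>open \<Omega>\<close> closure_subset interior_maximal by blast
    then obtain q where q: "\<And>x. x \<in> ?K \<Longrightarrow> v x0 + q \<bullet> (x - x0) \<le> v x"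
      using convex_on_subgradient_at_interior[OF assms(4)] by blast
    define z where "z = x0 + (1 / a) *\<^sub>R q"
    have "is_prox a v ?K z x0"
      unfolding z_def using assms(5) \<open>x0 \<in> \<Omega>\<close> closure_subset q by (intro is_prox_if_subgradient) auto
    then have "z \<in> vertex_set a v \<Omega> F" and "prox a v ?K z = x0"
      using vertex_set_memI[OF _ \<open>x0 \<in> F\<close> \<open>x0 \<in> \<Omega>\<close>] prox_eqI[OF prox_props] assms(5) by auto
    then show "x0 \<in> prox a v ?K ` vertex_set a v \<Omega> F" by force
  qed
  then show ?thesis
    using emeasure_subset_nonexpansive_image_le_outer_lmeasure[OF lipschitz_on_prox[OF prox_props] assms(6)]
    by blast
qed

end
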